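(* On the uniform one-dimensional grid of spacing $h$, consider the finite difference operator \[ -F^{1D,e}[u]=A^+\left(\lvert u_x^h\rvert^+,-u_{xx}^h\right)+A^-\left(-\lvert u_x^h\rvert^-,-u_{xx}^h\right). \] Then $-F^{1D,e}$ is elliptic and consistent with $-F^{1D}$, where $F^{1D}[u]=A(u_x,u_{xx})=(u_x^2u_{xx})^{1/3}$.
   Context: $A(p,q)=(p^2q)^{1/3}$ (real cube root), $x^+=\max(x,0)$, $x^-=\min(x,0)$, $A^+(p,q)=A(p^+,q^+)$, $A^-(p,q)=A(p^-,q^-)$. For a grid function $u$: $D^-_xu(x)=\frac{u(x)-u(x-h)}h$, $-D^+_xu(x)=\frac{u(x)-u(x+h)}h$, $\lvert u_x^h\rvert^+=\max\{-D^+_xu,D^-_xu,0\}$, $-\lvert u_x^h\rvert^-=\min\{-D^+_xu,D^-_xu,0\}$, and $u_{xx}^h(x)=\frac{u(x+h)-2u(x)+u(x-h)}{h^2}$. A finite difference operator has the form $F^h[u](x)=F^h(x,u(x),u(x)-u(\cdot))$ (depending on $u(x)$ and the differences $u(x)-u(y)$ for grid points $y$); it is elliptic if $r\le s$ and $v(\cdot)\le w(\cdot)$ imply $F^h(x,r,v(\cdot))\le F^h(x,s,w(\cdot))$. It is consistent with an operator $F$ if for every smooth $\phi$ and every $x$, $\lim_{h\to0,\,y\to x}F^h[\phi](y)=F[\phi](x)$. *)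

theory Defs
  imports "HOL-Analysis.Analysis"
begin

text \<open>Real cube root: Isabelle's root 3 is the odd real root, defined for negative arguments.\<close>
definition A :: "real \<Rightarrow> real \<Rightarrow> real" where
  "A p q = root 3 (p\<^sup>2 * q)"

definition pos_part :: "real \<Rightarrow> real" where "pos_part x = max x 0"
definition neg_part :: "real \<Rightarrow> real" where "neg_part x = min x 0"

definition Aplus :: "real \<Rightarrow> real \<Rightarrow> real" where
  "Aplus p q = A (pos_part p) (pos_part q)"
definition Aminus :: "real \<Rightarrow> real \<Rightarrow> real" where
  "Aminus p q = A (neg_part p) (neg_part q)"

definition Dminus :: "real \<Rightarrow> (real \<Rightarrow> real) \<Rightarrow> real \<Rightarrow> real" where
  "Dminus h u x = (u x - u (x - h)) / h"
definition mDplus :: "real \<Rightarrow> (real \<Rightarrow> real) \<Rightarrow> real \<Rightarrow> real" where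
  "mDplus h u x = (u x - u (x + h)) / h"
definition absux_plus :: "real \<Rightarrow> (real \<Rightarrow> real) \<Rightarrow> real \<Rightarrow> real" where
  "absux_plus h u x = max (max (mDplus h u x) (Dminus h u x)) 0"
definition mabsux_minus :: "real \<Rightarrow> (real \<Rightarrow> real) \<Rightarrow> real \<Rightarrow> real" where
  "mabsux_minus h u x = min (min (mDplus h u x) (Dminus h u x)) 0"
definition uxx :: "real \<Rightarrow> (real \<Rightarrow> real) \<Rightarrow> real \<Rightarrow> real" where
  "uxx h u x = (u (x + h) - 2 * u x + u (x - h)) / h\<^sup>2"

definition mF1De :: "real \<Rightarrow> (real \<Rightarrow> real) \<Rightarrow> real \<Rightarrow> real" where
  "mF1De h u x = Aplus (absux_plus h u x) (- uxx h u x)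
               + Aminus (mabsux_minus h u x) (- uxx h u x)"

definition F1D :: "(real \<Rightarrow> real) \<Rightarrow> real \<Rightarrow> real" where
  "F1D u x = A (deriv u x) (deriv (deriv u) x)"

definition elliptic_scheme ::
  "(real \<Rightarrow> (real \<Rightarrow> real) \<Rightarrow> real \<Rightarrow> real) \<Rightarrow> bool" where
  "elliptic_scheme Fh \<longleftrightarrow>
    (\<exists>G :: real \<Rightarrow> real \<Rightarrow> real \<Rightarrow> (real \<Rightarrow> real) \<Rightarrow> real.
       (\<forall>h u x. h > 0 \<longrightarrow> Fh h u x = G h x (u x) (\<lambda>y. u x - u y)) \<and>
       (\<forall>h x r s v w. h > 0 \<longrightarrow> r \<le> s \<longrightarrow>
            (\<forall>k::int. v (x + of_int k * h) \<le> w (x + of_int k * h)) \<longrightarrow>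
            G h x r v \<le> G h x s w))"

definition smooth :: "(real \<Rightarrow> real) \<Rightarrow> bool" where
  "smooth \<phi> \<longleftrightarrow> (\<forall>n x. ((deriv ^^ n) \<phi>) differentiable (at x))"

definition consistent_with ::
  "(real \<Rightarrow> (real \<Rightarrow> real) \<Rightarrow> real \<Rightarrow> real) \<Rightarrow> ((real \<Rightarrow> real) \<Rightarrow> real \<Rightarrow> real) \<Rightarrow> bool" where
  "consistent_with Fh F \<longleftrightarrow>
    (\<forall>\<phi> x. smooth \<phi> \<longrightarrow>
       ((\<lambda>(h, y). Fh h \<phi> y) \<longlongrightarrow> F \<phi> x) (at_right 0 \<times>\<^sub>F nhds x))"

end

theory Submission
  imports Defs
begin

text \<open>Ellipticity: the scheme depends on u only through the two neighbour differences
  u x - u (x \<plusminus> h), and A^+, A^- are nondecreasing in both arguments.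
  Consistency: every difference quotient equals the corresponding derivative at a point
  within distance h (mean value theorem), so the quotients converge to \<phi>'(x), \<phi>''(x);
  by continuity of A^\<plusminus> the scheme converges to
  A^+(|\<phi>'|, -\<phi>'') + A^-(-|\<phi>'|, -\<phi>'') = A(\<phi>', -\<phi>'') = -A(\<phi>', \<phi>''),
  since exactly one of the two terms is nonzero and the cube root is odd.\<close>

lemma Aplus_mono:
  assumes "p \<le> p'" "q \<le> q'"
  shows "Aplus p q \<le> Aplus p' q'"
proof -
  have "(max p 0)\<^sup>2 \<le> (max p' 0)\<^sup>2"
    using assms by (intro power_mono) auto
  then have "(max p 0)\<^sup>2 * max q 0 \<le> (max p' 0)\<^sup>2 * max q' 0"
    using assms by (intro mult_mono) auto
  then show ?thesis
    by (simp add: Aplus_def A_def pos_part_def)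
qed

lemma Aminus_mono:
  assumes "p \<le> p'" "q \<le> q'"
  shows "Aminus p q \<le> Aminus p' q'"
proof -
  have "(- min p' 0)\<^sup>2 \<le> (- min p 0)\<^sup>2"
    using assms by (intro power_mono) auto
  then have "(min p 0)\<^sup>2 * min q 0 \<le> (min p' 0)\<^sup>2 * min q 0"
    by (intro mult_right_mono_neg) auto
  also have "\<dots> \<le> (min p' 0)\<^sup>2 * min q' 0"
    using assms by (intro mult_left_mono) auto
  finally show ?thesis
    by (simp add: Aminus_def A_def neg_part_def)
qed

lemma tendsto_Aplus [tendsto_intros]:
  "(f \<longlongrightarrow> a) F \<Longrightarrow> (g \<longlongrightarrow> b) F \<Longrightarrow> ((\<lambda>z. Aplus (f z) (g z)) \<longlongrightarrow> Aplus a b) F"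
  unfolding Aplus_def A_def pos_part_def by (intro tendsto_intros)

lemma tendsto_Aminus [tendsto_intros]:
  "(f \<longlongrightarrow> a) F \<Longrightarrow> (g \<longlongrightarrow> b) F \<Longrightarrow> ((\<lambda>z. Aminus (f z) (g z)) \<longlongrightarrow> Aminus a b) F"
  unfolding Aminus_def A_def neg_part_def by (intro tendsto_intros)

lemma Aplus_abs_plus_Aminus_minus_abs:
  "Aplus \<bar>p\<bar> (- q) + Aminus (- \<bar>p\<bar>) (- q) = - A p q"
proof -
  have odd: "root 3 (- (p\<^sup>2 * q)) = - root 3 (p\<^sup>2 * q)"
    by (rule real_root_minus)
  show ?thesis
    by (cases "q \<ge> 0") (auto simp: Aplus_def Aminus_def A_def pos_part_def neg_part_def
                                   max_def min_def odd)
qed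

definition mF1De_of_differences :: "real \<Rightarrow> real \<Rightarrow> (real \<Rightarrow> real) \<Rightarrow> real" where
  "mF1De_of_differences h x v =
     Aplus (max (max (v (x + h) / h) (v (x - h) / h)) 0) ((v (x + h) + v (x - h)) / h\<^sup>2)
   + Aminus (min (min (v (x + h) / h) (v (x - h) / h)) 0) ((v (x + h) + v (x - h)) / h\<^sup>2)"

lemma mF1De_eq_of_differences:
  "mF1De h u x = mF1De_of_differences h x (\<lambda>y. u x - u y)"
proof -
  have "- uxx h u x = ((u x - u (x + h)) + (u x - u (x - h))) / h\<^sup>2"
    unfolding uxx_def minus_divide_left by (rule arg_cong[where f = "\<lambda>t. t / h\<^sup>2"]) simp
  then show ?thesis
    unfolding mF1De_def mF1De_of_differences_def absux_plus_def mabsux_minus_def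
      mDplus_def Dminus_def by simp
qed

lemma mF1De_of_differences_mono:
  assumes "h > 0" and "v (x + h) \<le> w (x + h)" and "v (x - h) \<le> w (x - h)"
  shows "mF1De_of_differences h x v \<le> mF1De_of_differences h x w"
proof -
  have "v (x + h) / h \<le> w (x + h) / h" "v (x - h) / h \<le> w (x - h) / h"
    using assms by (simp_all add: divide_right_mono)
  moreover have "(v (x + h) + v (x - h)) / h\<^sup>2 \<le> (w (x + h) + w (x - h)) / h\<^sup>2"
    using assms by (intro divide_right_mono) auto
  ultimately show ?thesis
    unfolding mF1De_of_differences_def
    by (intro add_mono Aplus_mono Aminus_mono max.mono min.mono) auto
qed

lemma elliptic_mF1De: "elliptic_scheme mF1De"
  unfolding elliptic_scheme_def
proof (intro exI[of _ "\<lambda>h x r v. mF1De_of_differences h x v"] conjI allI impI)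
  fix h x r s :: real and v w :: "real \<Rightarrow> real"
  assume "h > 0" and grid: "\<forall>k::int. v (x + of_int k * h) \<le> w (x + of_int k * h)"
  from grid[rule_format, of 1] grid[rule_format, of "-1"]
  show "mF1De_of_differences h x v \<le> mF1De_of_differences h x w"
    using \<open>h > 0\<close> by (intro mF1De_of_differences_mono) simp_all
qed (rule mF1De_eq_of_differences)

lemma tendsto_at_right_nhds_if_mean_value:
  fixes g :: "real \<Rightarrow> 'a::metric_space"
  assumes "isCont g x"
    and mean_value: "\<And>h y. h > 0 \<Longrightarrow> \<exists>z. \<bar>z - y\<bar> \<le> h \<and> F h y = g z"
  shows "((\<lambda>(h, y). F h y) \<longlongrightarrow> g x) (at_right 0 \<times>\<^sub>F nhds x)"
proof (rule tendstoI)
  fix e :: real assume "e > 0"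
  with assms(1) obtain d where "d > 0" and d: "\<And>x'. dist x' x < d \<Longrightarrow> dist (g x') (g x) < e"
    unfolding continuous_at_eps_delta by blast
  show "\<forall>\<^sub>F p in at_right 0 \<times>\<^sub>F nhds x. dist (case p of (h, y) \<Rightarrow> F h y) (g x) < e"
    unfolding eventually_prod_filter
  proof (intro exI conjI allI impI)
    show "\<forall>\<^sub>F h in at_right 0. h \<in> {0<..<d/2}"
      using \<open>d > 0\<close> by (intro eventually_at_right_real) simp
    show "\<forall>\<^sub>F y in nhds x. dist y x < d/2"
      using \<open>d > 0\<close> unfolding eventually_nhds_metric by (intro exI[of _ "d/2"]) auto
    fix h y :: real assume h: "h \<in> {0<..<d/2}" and y: "dist y x < d/2"
    then obtain z where z: "\<bar>z - y\<bar> \<le> h" "F h y = g z"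
      using mean_value by auto
    then have "dist z x < d"
      using h y unfolding dist_real_def abs_diff_le_iff abs_diff_less_iff by auto
    then show "dist (case (h, y) of (h, y) \<Rightarrow> F h y) (g x) < e"
      using d z by simp
  qed
qed

lemma difference_quotient_mean_value:
  assumes "\<And>t. (f has_real_derivative f' t) (at t)" and "h > 0"
  obtains z where "y < z" "z < y + h" "f (y + h) - f y = h * f' z"
  using MVT2[of y "y + h" f f'] assms by auto

lemma second_difference_mean_value:
  assumes f: "\<And>t. (f has_real_derivative f' t) (at t)"
    and f': "\<And>t. (f' has_real_derivative f'' t) (at t)"
    and "h > 0"
  obtains z where "\<bar>z - y\<bar> < h" "f (y + h) - 2 * f y + f (y - h) = h\<^sup>2 * f'' z"
proof -
  have "((\<lambda>t. f (t + h) - f t) has_real_derivative f' (t + h) - f' t) (at t)" for t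
    using f[of "t + h"] by (intro DERIV_diff f) (simp add: DERIV_shift)
  from difference_quotient_mean_value[OF this \<open>h > 0\<close>, of "y - h"]
  obtain \<xi> where \<xi>: "y - h < \<xi>" "\<xi> < y"
    "(f (y + h) - f y) - (f y - f (y - h)) = h * (f' (\<xi> + h) - f' \<xi>)"
    by (auto simp: algebra_simps)
  obtain z where z: "\<xi> < z" "z < \<xi> + h" "f' (\<xi> + h) - f' \<xi> = h * f'' z"
    using difference_quotient_mean_value[OF f' \<open>h > 0\<close>] .
  show ?thesis
  proof
    show "\<bar>z - y\<bar> < h" using \<xi> z by auto
    show "f (y + h) - 2 * f y + f (y - h) = h\<^sup>2 * f'' z"
      using \<xi>(3) z(3) by (simp add: power2_eq_square algebra_simps)
  qed
qed

lemma
  assumes "\<And>t. (f has_real_derivative f' t) (at t)" and "isCont f' x"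
  shows tendsto_mDplus: "((\<lambda>(h, y). mDplus h f y) \<longlongrightarrow> - f' x) (at_right 0 \<times>\<^sub>F nhds x)"
    and tendsto_Dminus: "((\<lambda>(h, y). Dminus h f y) \<longlongrightarrow> f' x) (at_right 0 \<times>\<^sub>F nhds x)"
proof -
  show "((\<lambda>(h, y). mDplus h f y) \<longlongrightarrow> - f' x) (at_right 0 \<times>\<^sub>F nhds x)"
  proof (rule tendsto_at_right_nhds_if_mean_value[where g = "\<lambda>z. - f' z"])
    fix h y :: real assume "h > 0"
    then obtain z where "y < z" "z < y + h" "f (y + h) - f y = h * f' z"
      using difference_quotient_mean_value[OF assms(1)] by blast
    with \<open>h > 0\<close> show "\<exists>z. \<bar>z - y\<bar> \<le> h \<and> mDplus h f y = - f' z"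
      unfolding mDplus_def by (intro exI[of _ z]) (auto simp: field_simps)
  qed (use assms(2) in simp)
  show "((\<lambda>(h, y). Dminus h f y) \<longlongrightarrow> f' x) (at_right 0 \<times>\<^sub>F nhds x)"
  proof (rule tendsto_at_right_nhds_if_mean_value[OF assms(2)])
    fix h y :: real assume "h > 0"
    then obtain z where "y - h < z" "z < y" "f y - f (y - h) = h * f' z"
      using difference_quotient_mean_value[OF assms(1), of h "y - h"] by auto
    with \<open>h > 0\<close> show "\<exists>z. \<bar>z - y\<bar> \<le> h \<and> Dminus h f y = f' z"
      unfolding Dminus_def by (intro exI[of _ z]) (auto simp: field_simps)
  qed
qed

lemma tendsto_uxx:
  assumes "\<And>t. (f has_real_derivative f' t) (at t)"
    and "\<And>t. (f' has_real_derivative f'' t) (at t)" and "isCont f'' x"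
  shows "((\<lambda>(h, y). uxx h f y) \<longlongrightarrow> f'' x) (at_right 0 \<times>\<^sub>F nhds x)"
proof (rule tendsto_at_right_nhds_if_mean_value[OF assms(3)])
  fix h y :: real assume "h > 0"
  then obtain z where "\<bar>z - y\<bar> < h" "f (y + h) - 2 * f y + f (y - h) = h\<^sup>2 * f'' z"
    using second_difference_mean_value[OF assms(1,2)] by blast
  with \<open>h > 0\<close> show "\<exists>z. \<bar>z - y\<bar> \<le> h \<and> uxx h f y = f'' z"
    unfolding uxx_def by (intro exI[of _ z]) auto
qed

lemma smooth_has_derivatives:
  assumes "smooth \<phi>"
  shows "(\<phi> has_real_derivative deriv \<phi> t) (at t)"
    and "(deriv \<phi> has_real_derivative deriv (deriv \<phi>) t) (at t)"
    and "isCont (deriv (deriv \<phi>)) t"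
proof -
  have "(deriv ^^ n) \<phi> differentiable (at t)" for n t
    using assms unfolding smooth_def by blast
  from this[of 0] this[of 1] this[of 2] show
    "(\<phi> has_real_derivative deriv \<phi> t) (at t)"
    "(deriv \<phi> has_real_derivative deriv (deriv \<phi>) t) (at t)"
    "isCont (deriv (deriv \<phi>)) t"
    by (auto simp: DERIV_deriv_iff_real_differentiable numeral_2_eq_2
             intro: differentiable_imp_continuous_within)
qed

lemma consistent_mF1De: "consistent_with mF1De (\<lambda>u x. - F1D u x)"
  unfolding consistent_with_def
proof (intro allI impI)
  fix \<phi> :: "real \<Rightarrow> real" and x :: real
  assume "smooth \<phi>"
  let ?p = "deriv \<phi> x" and ?q = "deriv (deriv \<phi>) x" and ?F = "at_right 0 \<times>\<^sub>F nhds x"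
  note D = smooth_has_derivatives[OF \<open>smooth \<phi>\<close>]
  have "isCont (deriv \<phi>) x"
    using D(2) by (rule DERIV_isCont)
  with D have "((\<lambda>(h, y). mDplus h \<phi> y) \<longlongrightarrow> - ?p) ?F" "((\<lambda>(h, y). Dminus h \<phi> y) \<longlongrightarrow> ?p) ?F"
    and "((\<lambda>(h, y). uxx h \<phi> y) \<longlongrightarrow> ?q) ?F"
    by (auto intro: tendsto_mDplus tendsto_Dminus tendsto_uxx)
  then have "((\<lambda>(h, y). mF1De h \<phi> y) \<longlongrightarrow>
      Aplus (max (max (- ?p) ?p) 0) (- ?q) + Aminus (min (min (- ?p) ?p) 0) (- ?q)) ?F"
    unfolding mF1De_def absux_plus_def mabsux_minus_def case_prod_unfold
    by (intro tendsto_intros)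
  moreover have "max (max (- ?p) ?p) 0 = \<bar>?p\<bar>" "min (min (- ?p) ?p) 0 = - \<bar>?p\<bar>"
    by auto
  ultimately show "((\<lambda>(h, y). mF1De h \<phi> y) \<longlongrightarrow> - F1D \<phi> x) ?F"
    by (simp add: Aplus_abs_plus_Aminus_minus_abs F1D_def)
qed

theorem mainTheorem5:
  shows "elliptic_scheme mF1De \<and> consistent_with mF1De (\<lambda>u x. - F1D u x)"
  using elliptic_mF1De consistent_mF1De by blast

end
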